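(* Let $(\mathrm{G},\mu)$ be a Lorentzian flat Lie group. Then $\mathrm{G}$ admits a timelike left-invariant Killing vector field (for $\mu$) if and only if $\mathrm{G}$ admits a left-invariant Riemannian metric whose Levi-Civita connection coincides with the Levi-Civita connection of $\mu$.
   Context: A Lorentzian flat Lie group is a connected Lie group $\mathrm{G}$ endowed with a left-invariant flat pseudo-Riemannian metric $\mu$ of signature $(-,+,\dots,+)$. A vector field $X$ is timelike if $\mu(X,X)<0$ everywhere, and Killing if the flow of $X$ preserves $\mu$. *)

theory Defs
  imports "HOL-Analysis.Analysis"
begin

text \<open>Everything is expressed at the level of the Lie algebra of the (connected) Lie group:
left-invariant vector fields are identified with elements of the Lie algebra,
left-invariant tensors with tensors on the Lie algebra.\<close>

definition lie_algebra :: "('a::euclidean_space \<Rightarrow> 'a \<Rightarrow> 'a) \<Rightarrow> bool" where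
  "lie_algebra br \<longleftrightarrow> bilinear br \<and> (\<forall>x y. br x y = - br y x) \<and>
     (\<forall>x y z. br x (br y z) + br y (br z x) + br z (br x y) = 0)"

definition sym_bilinear_form :: "('a::euclidean_space \<Rightarrow> 'a \<Rightarrow> real) \<Rightarrow> bool" where
  "sym_bilinear_form B \<longleftrightarrow> bilinear B \<and> (\<forall>x y. B x y = B y x)"

definition nondegenerate :: "('a::euclidean_space \<Rightarrow> 'a \<Rightarrow> real) \<Rightarrow> bool" where
  "nondegenerate B \<longleftrightarrow> (\<forall>x. (\<forall>y. B x y = 0) \<longrightarrow> x = 0)"

definition lorentzian_form :: "('a::euclidean_space \<Rightarrow> 'a \<Rightarrow> real) \<Rightarrow> bool" where
  "lorentzian_form B \<longleftrightarrow> sym_bilinear_form B \<and> nondegenerate B \<and> (\<exists>v. B v v < 0) \<and>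
     (\<forall>W. subspace W \<and> (\<forall>w\<in>W. w \<noteq> 0 \<longrightarrow> B w w < 0) \<longrightarrow> dim W \<le> 1)"

definition riemannian_form :: "('a::euclidean_space \<Rightarrow> 'a \<Rightarrow> real) \<Rightarrow> bool" where
  "riemannian_form g \<longleftrightarrow> sym_bilinear_form g \<and> (\<forall>x. x \<noteq> 0 \<longrightarrow> g x x > 0)"

text \<open>Levi-Civita connection of a left-invariant metric, restricted to left-invariant fields:
bilinear, torsion free and metric (B of two left-invariant fields is constant).\<close>
definition is_levi_civita ::
  "('a::euclidean_space \<Rightarrow> 'a \<Rightarrow> real) \<Rightarrow> ('a \<Rightarrow> 'a \<Rightarrow> 'a) \<Rightarrow> ('a \<Rightarrow> 'a \<Rightarrow> 'a) \<Rightarrow> bool" where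
  "is_levi_civita B br nab \<longleftrightarrow> bilinear nab \<and>
     (\<forall>u v. nab u v - nab v u = br u v) \<and>
     (\<forall>u v w. B (nab u v) w + B v (nab u w) = 0)"

definition levi_civita ::
  "('a::euclidean_space \<Rightarrow> 'a \<Rightarrow> real) \<Rightarrow> ('a \<Rightarrow> 'a \<Rightarrow> 'a) \<Rightarrow> ('a \<Rightarrow> 'a \<Rightarrow> 'a)" where
  "levi_civita B br = (THE nab. is_levi_civita B br nab)"

definition flat_connection :: "('a::euclidean_space \<Rightarrow> 'a \<Rightarrow> 'a) \<Rightarrow> ('a \<Rightarrow> 'a \<Rightarrow> 'a) \<Rightarrow> bool" where
  "flat_connection br nab \<longleftrightarrow>
     (\<forall>u v w. nab u (nab v w) - nab v (nab u w) - nab (br u v) w = 0)"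

definition killing :: "('a::euclidean_space \<Rightarrow> 'a \<Rightarrow> real) \<Rightarrow> ('a \<Rightarrow> 'a \<Rightarrow> 'a) \<Rightarrow> 'a \<Rightarrow> bool" where
  "killing B br X \<longleftrightarrow>
     (\<forall>u v. B (levi_civita B br u X) v + B u (levi_civita B br v X) = 0)"

end

theory Submission
  imports Defs
begin

text \<open>
  For a Killing field X of a flat metric, flatness and torsion-freeness make the second
  covariant derivative H(u,v) = \<nabla>_u \<nabla>_v X - \<nabla>_(\<nabla>_u v) X symmetric in u, v, while
  the Killing equation makes \<mu>(H(u,v), w) skew in v, w; hence H = 0. Together with
  \<nabla>_X X = 0 and the Killing equation this makes each \<nabla>_u X isotropic; as it is also
  \<mu>-orthogonal to X, it vanishes when X is timelike: X is parallel. Reversing the sign of \<mu>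
  along a parallel timelike X gives a Riemannian metric for which \<nabla> is still metric, hence
  its Levi-Civita connection.

  Conversely, let \<nabla> be the Levi-Civita connection of both \<mu> and a Riemannian g. A
  minimiser X of \<mu>/g on the unit sphere satisfies \<mu>(X,\<cdot>) = \<lambda> g(X,\<cdot>) with \<lambda> < 0, so
  X is timelike. Since \<nabla> preserves both forms, every \<nabla>_u X satisfies the same relation
  and is g-orthogonal, hence \<mu>-orthogonal, to X; it would thus be both spacelike and
  timelike unless it vanishes. So X is parallel, in particular Killing.
\<close>

lemma linear_functional_eq_inner:
  fixes f :: "'a::euclidean_space \<Rightarrow> real"
  assumes "linear f"
  shows "f x = x \<bullet> adjoint f 1"
  using adjoint_works[OF assms, of x 1] by simp

lemma nondegenerate_eqI:
  assumes "bilinear B" "nondegenerate B" "\<And>w. B x w = B y w"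
  shows "x = y"
proof -
  have "\<forall>w. B (x - y) w = 0" using assms(3) by (simp add: bilinear_lsub[OF assms(1)])
  then show ?thesis using assms(2) unfolding nondegenerate_def by auto
qed

lemma nondegenerate_represents_linear:
  fixes B :: "'a::euclidean_space \<Rightarrow> 'a \<Rightarrow> real"
  assumes B: "bilinear B" "nondegenerate B" and f: "linear f"
  obtains z where "\<And>w. B z w = f w"
proof -
  define Phi where "Phi z = adjoint (B z) 1" for z
  have Phi: "w \<bullet> Phi z = B z w" for z w
    unfolding Phi_def using linear_functional_eq_inner B(1) by (metis bilinear_def)
  have "linear Phi"
    by (intro linearI; subst vector_eq_ldot[symmetric])
      (simp_all add: Phi inner_add_right bilinear_ladd[OF B(1)] bilinear_lmul[OF B(1)])
  moreover have "inj Phi"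
    unfolding linear_injective_0[OF \<open>linear Phi\<close>]
    using B(2) Phi by (metis inner_zero_right nondegenerate_def)
  ultimately obtain z where "Phi z = adjoint f 1"
    by (metis linear_inj_imp_surj surjD)
  then have "B z w = f w" for w
    using Phi[of w z] linear_functional_eq_inner[OF f, of w] by simp
  then show thesis by (rule that)
qed

lemma sym_skew_eq_0:
  fixes T :: "'a \<Rightarrow> 'a \<Rightarrow> 'a \<Rightarrow> real"
  assumes sym: "\<And>u v w. T u v w = T v u w" and skew: "\<And>u v w. T u v w = - T u w v"
  shows "T u v w = 0"
proof -
  have "T u v w = - T w u v" by (metis sym skew)
  also have "\<dots> = T v w u" by (metis sym skew)
  also have "\<dots> = - T u v w" by (metis sym skew)
  finally show ?thesis by simp
qed

lemma is_levi_civita_unique: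
  assumes B: "sym_bilinear_form B" "nondegenerate B"
    and nab1: "is_levi_civita B br nab1" and nab2: "is_levi_civita B br nab2"
  shows "nab1 = nab2"
proof -
  have bl: "bilinear B" and sym: "\<And>x y. B x y = B y x"
    using B(1) by (auto simp: sym_bilinear_form_def)
  define T where "T u v w = B (nab1 u v - nab2 u v) w" for u v w
  have "T u v w = 0" for u v w
  proof (rule sym_skew_eq_0[of T])
    fix u v w
    have "nab1 u v - nab1 v u = nab2 u v - nab2 v u"
      using nab1 nab2 unfolding is_levi_civita_def by simp
    then have "nab1 u v - nab2 u v = nab1 v u - nab2 v u"
      by (simp add: algebra_simps)
    then show "T u v w = T v u w" unfolding T_def by simp
    have "B (nab1 u v) w + B v (nab1 u w) = 0" "B (nab2 u v) w + B v (nab2 u w) = 0"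
      using nab1 nab2 unfolding is_levi_civita_def by blast+
    then show "T u v w = - T u w v"
      unfolding T_def bilinear_lsub[OF bl] using sym[of v "nab1 u w"] sym[of v "nab2 u w"]
      by linarith
  qed
  then have "nab1 u v - nab2 u v = 0" for u v
    using B(2) unfolding T_def nondegenerate_def by blast
  then show ?thesis by (intro ext) simp
qed

lemma ex_is_levi_civita:
  fixes B :: "'a::euclidean_space \<Rightarrow> 'a \<Rightarrow> real"
  assumes B: "sym_bilinear_form B" "nondegenerate B"
    and br: "bilinear br" "\<And>x y. br x y = - br y x"
  shows "\<exists>nab. is_levi_civita B br nab"
proof -
  have bl: "bilinear B" and sym: "\<And>x y. B x y = B y x"
    using B(1) by (auto simp: sym_bilinear_form_def)
  note bilin = bilinear_ladd[OF bl] bilinear_lmul[OF bl] bilinear_radd[OF bl] bilinear_rmul[OF bl]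
    bilinear_lsub[OF bl] bilinear_lneg[OF bl] bilinear_ladd[OF br(1)] bilinear_lmul[OF br(1)]
    bilinear_radd[OF br(1)] bilinear_rmul[OF br(1)]
  \<comment> \<open>Koszul formula for left-invariant fields\<close>
  define K where "K u v w = (B (br u v) w - B (br v w) u + B (br w u) v) / 2" for u v w
  have "linear (K u v)" for u v
    unfolding K_def by (intro linearI) (simp_all add: bilin field_simps)
  then have "\<exists>z. \<forall>w. B z w = K u v w" for u v
    using nondegenerate_represents_linear[OF bl B(2)] by metis
  then obtain nab where nab: "\<And>u v w. B (nab u v) w = K u v w"
    by metis
  have "is_levi_civita B br nab"
    unfolding is_levi_civita_def
  proof (intro conjI allI)
    show "bilinear nab"
      unfolding bilinear_def linear_iff
      by (intro conjI allI; rule nondegenerate_eqI[OF bl B(2)]; simp add: bilin nab K_def field_simps)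
    fix u v
    show "nab u v - nab v u = br u v"
    proof (rule nondegenerate_eqI[OF bl B(2)])
      fix w
      show "B (nab u v - nab v u) w = B (br u v) w"
        by (simp add: bilin nab K_def br(2)[of v u] br(2)[of w v] br(2)[of u w]
            sym[of v "br _ _"] sym[of u "br _ _"] field_simps)
    qed
    fix w
    show "B (nab u v) w + B v (nab u w) = 0"
      by (simp add: nab K_def br(2)[of v u] br(2)[of w v] br(2)[of u w] sym[of v "nab _ _"]
          sym[of w "br _ _"] sym[of v "br _ _"] sym[of u "br _ _"] bilin field_simps)
  qed
  then show ?thesis by blast
qed

lemma is_levi_civita_levi_civita:
  fixes B :: "'a::euclidean_space \<Rightarrow> 'a \<Rightarrow> real"
  assumes "sym_bilinear_form B" "nondegenerate B" "bilinear br" "\<And>x y. br x y = - br y x"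
  shows "is_levi_civita B br (levi_civita B br)"
  unfolding levi_civita_def
  using ex_is_levi_civita[OF assms] is_levi_civita_unique[OF assms(1,2)] by (metis theI)

lemma levi_civita_eqI:
  assumes "sym_bilinear_form B" "nondegenerate B" "is_levi_civita B br nab"
  shows "levi_civita B br = nab"
  unfolding levi_civita_def
  using is_levi_civita_unique[OF assms(1,2)] assms(3) by blast

lemma quadratic_takes_negative_value:
  fixes a c :: real
  assumes "a \<noteq> 0"
  obtains t where "2 * t * a + t\<^sup>2 * c < 0"
proof
  define d where "d = \<bar>c\<bar> + 1"
  have d: "d > 0" "c \<le> d" unfolding d_def by auto
  have "(- a / d)\<^sup>2 * c \<le> (- a / d)\<^sup>2 * d" using d by (intro mult_left_mono) auto
  also have "\<dots> = a\<^sup>2 / d" using d by (simp add: power2_eq_square field_simps)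
  also have "\<dots> < 2 * (a\<^sup>2 / d)" using assms d by (simp add: field_simps)
  also have "\<dots> = - (2 * (- a / d) * a)" by (simp add: power2_eq_square field_simps)
  finally show "2 * (- a / d) * a + (- a / d)\<^sup>2 * c < 0" by linarith
qed

lemma semidefinite_isotropic_orthogonal:
  fixes Q :: "'a::real_vector \<Rightarrow> 'a \<Rightarrow> real"
  assumes Q: "bilinear Q" "\<And>x y. Q x y = Q y x"
    and S: "subspace S" "\<And>x. x \<in> S \<Longrightarrow> Q x x \<ge> 0"
    and X: "X \<in> S" "Q X X = 0" and w: "w \<in> S"
  shows "Q X w = 0"
proof (rule ccontr)
  assume "Q X w \<noteq> 0"
  then obtain t where t: "2 * t * Q X w + t\<^sup>2 * Q w w < 0"
    by (rule quadratic_takes_negative_value)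
  have "Q (X + t *\<^sub>R w) (X + t *\<^sub>R w) = 2 * t * Q X w + t\<^sup>2 * Q w w"
    using Q(2)[of w X] X(2)
    by (simp add: bilinear_ladd[OF Q(1)] bilinear_radd[OF Q(1)] bilinear_lmul[OF Q(1)]
        bilinear_rmul[OF Q(1)] power2_eq_square algebra_simps)
  moreover have "X + t *\<^sub>R w \<in> S"
    using S(1) X(1) w by (simp add: subspace_add subspace_scale)
  ultimately show False using S(2) t by fastforce
qed

lemma lorentzian_timelike_not_orthogonal:
  assumes lor: "lorentzian_form mu" and X: "mu X X < 0" and Y: "mu Y Y < 0"
  shows "mu X Y \<noteq> 0"
proof
  assume XY: "mu X Y = 0"
  have bl: "bilinear mu" and sym: "\<And>x y. mu x y = mu y x"
    using lor by (auto simp: lorentzian_form_def sym_bilinear_form_def)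
  note bilin = bilinear_ladd[OF bl] bilinear_radd[OF bl] bilinear_lmul[OF bl] bilinear_rmul[OF bl]
  have X0: "X \<noteq> 0" and Y0: "Y \<noteq> 0"
    using X Y bilinear_lzero[OF bl] by fastforce+
  have "X \<notin> span {Y}"
  proof
    assume "X \<in> span {Y}"
    then obtain k where "X = k *\<^sub>R Y" by (auto simp: span_singleton)
    then show False using XY Y X0 by (simp add: bilin)
  qed
  then have XY_indep: "independent {X, Y}" and "X \<noteq> Y"
    using Y0 span_base[of Y "{Y}"] by (auto simp: independent_insert)
  have "mu w w < 0" if "w \<in> span {X, Y}" "w \<noteq> 0" for w
  proof -
    obtain a b where w: "w = a *\<^sub>R X + b *\<^sub>R Y"
      using \<open>w \<in> span {X, Y}\<close> by (auto simp: span_insert span_singleton algebra_simps)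
    have "a \<noteq> 0 \<or> b \<noteq> 0" using \<open>w \<noteq> 0\<close> w by auto
    moreover have "a * a * mu X X \<le> 0" "b * b * mu Y Y \<le> 0"
      using X Y by (simp_all add: mult_nonneg_nonpos)
    moreover have "a * a * mu X X < 0" if "a \<noteq> 0"
      using X that by (auto simp add: mult_less_0_iff zero_less_mult_iff)
    moreover have "b * b * mu Y Y < 0" if "b \<noteq> 0"
      using Y that by (auto simp add: mult_less_0_iff zero_less_mult_iff)
    ultimately have "a * a * mu X X + b * b * mu Y Y < 0" by linarith
    then show ?thesis unfolding w using XY sym[of Y X] by (simp add: bilin)
  qed
  then have "dim (span {X, Y}) \<le> 1"
    using lor unfolding lorentzian_form_def by (meson subspace_span)
  moreover have "dim (span {X, Y}) = 2"
    using dim_span_eq_card_independent[OF XY_indep] \<open>X \<noteq> Y\<close> by simp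
  ultimately show False by simp
qed

lemma lorentzian_orthogonal_timelike_spacelike:
  assumes lor: "lorentzian_form mu" and X: "mu X X < 0" and YX: "mu Y X = 0" and Y0: "Y \<noteq> 0"
  shows "mu Y Y > 0"
proof (rule ccontr)
  assume not_pos: "\<not> mu Y Y > 0"
  have bl: "bilinear mu" and sym: "\<And>x y. mu x y = mu y x" and nd: "nondegenerate mu"
    using lor by (auto simp: lorentzian_form_def sym_bilinear_form_def)
  note bilin = bilinear_ladd[OF bl] bilinear_lmul[OF bl] bilinear_lsub[OF bl]
    bilinear_rsub[OF bl] bilinear_rmul[OF bl]
  define S where "S = {y. mu y X = 0}"
  have S: "subspace S"
    unfolding S_def subspace_def by (simp add: bilin bilinear_lzero[OF bl])
  have S_psd: "mu y y \<ge> 0" if "y \<in> S" for y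
    using lorentzian_timelike_not_orthogonal[OF lor X, of y] that sym[of X y]
    by (force simp: S_def)
  have "Y \<in> S" "mu Y Y = 0"
    using YX not_pos S_psd[of Y] by (auto simp: S_def)
  have "mu Y z = 0" for z
  proof -
    define s where "s = mu z X / mu X X"
    have "z - s *\<^sub>R X \<in> S" using X by (simp add: S_def s_def bilin)
    then have "mu Y (z - s *\<^sub>R X) = 0"
      using semidefinite_isotropic_orthogonal[of mu S Y, OF bl sym S S_psd] \<open>Y \<in> S\<close> \<open>mu Y Y = 0\<close>
      by blast
    then show ?thesis using YX by (simp add: bilin)
  qed
  then show False using nd Y0 unfolding nondegenerate_def by blast
qed

lemma riemannian_form_nondegenerate:
  "riemannian_form g \<Longrightarrow> nondegenerate g"
  unfolding riemannian_form_def nondegenerate_def by force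

text \<open>Reverses the sign of B on the line through X and keeps it on the B-orthogonal complement.\<close>

definition flip_along :: "('a::real_vector \<Rightarrow> 'a \<Rightarrow> real) \<Rightarrow> 'a \<Rightarrow> 'a \<Rightarrow> 'a \<Rightarrow> real" where
  "flip_along B X v w = B v w - 2 * B X v * B X w / B X X"

lemma riemannian_form_flip_along:
  assumes lor: "lorentzian_form mu" and X: "mu X X < 0"
  shows "riemannian_form (flip_along mu X)"
proof -
  have bl: "bilinear mu" and sym: "\<And>x y. mu x y = mu y x"
    using lor by (auto simp: lorentzian_form_def sym_bilinear_form_def)
  note bilin = bilinear_ladd[OF bl] bilinear_radd[OF bl] bilinear_lmul[OF bl] bilinear_rmul[OF bl]
    bilinear_lsub[OF bl] bilinear_rsub[OF bl]
  have "bilinear (flip_along mu X)"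
    unfolding bilinear_def linear_iff flip_along_def
    by (simp add: bilin add_divide_distrib[symmetric] algebra_simps)
  moreover have "flip_along mu X x y = flip_along mu X y x" for x y
    by (simp add: flip_along_def sym[of x y])
  moreover have "flip_along mu X x x > 0" if "x \<noteq> 0" for x
  proof -
    define s where "s = mu x X / mu X X"
    define Y where "Y = x - s *\<^sub>R X"
    have YX: "mu Y X = 0" unfolding Y_def s_def using X by (simp add: bilin)
    have x: "x = Y + s *\<^sub>R X" unfolding Y_def by simp
    have flip_x: "flip_along mu X x x = mu Y Y - s\<^sup>2 * mu X X"
      unfolding flip_along_def x using X YX sym[of X Y]
      by (simp add: bilin power2_eq_square field_simps)
    show ?thesis
    proof (cases "Y = 0")
      case True
      then have "s \<noteq> 0" using x that by auto
      then show ?thesis using flip_x True X bilinear_lzero[OF bl] by (simp add: mult_pos_neg)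
    next
      case False
      have "s\<^sup>2 * mu X X \<le> 0" using X by (simp add: mult_nonneg_nonpos)
      then show ?thesis
        using flip_x lorentzian_orthogonal_timelike_spacelike[OF lor X YX False] by linarith
    qed
  qed
  ultimately show ?thesis
    unfolding riemannian_form_def sym_bilinear_form_def by blast
qed

lemma is_levi_civita_flip_along:
  assumes B: "sym_bilinear_form B" and N: "is_levi_civita B br N" and parallel: "\<And>u. N u X = 0"
  shows "is_levi_civita (flip_along B X) br N"
proof -
  have bl: "bilinear B" and sym: "\<And>x y. B x y = B y x"
    using B by (auto simp: sym_bilinear_form_def)
  have metric: "\<And>u v w. B (N u v) w + B v (N u w) = 0"
    using N by (simp add: is_levi_civita_def)
  have "B X (N u v) = 0" for u v
    using metric[of u X v] parallel[of u] by (simp add: bilinear_lzero[OF bl])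
  then have "flip_along B X (N u v) w + flip_along B X v (N u w) = 0" for u v w
    unfolding flip_along_def using metric[of u v w] by (simp add: field_simps)
  then show ?thesis using N by (simp add: is_levi_civita_def)
qed

lemma flat_killing_second_derivative_eq_0:
  assumes B: "sym_bilinear_form B" "nondegenerate B"
    and N: "is_levi_civita B br N" and flat: "flat_connection br N"
    and killing: "\<And>u v. B (N u X) v + B u (N v X) = 0"
  shows "N u (N v X) = N (N u v) X"
proof -
  have bl: "bilinear B" and sym: "\<And>x y. B x y = B y x"
    using B(1) by (auto simp: sym_bilinear_form_def)
  have bN: "bilinear N" and torsion: "\<And>u v. N u v - N v u = br u v"
    and metric: "\<And>u v w. B (N u v) w + B v (N u w) = 0"
    using N by (auto simp: is_levi_civita_def)
  define T where "T u v w = B (N u (N v X) - N (N u v) X) w" for u v w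
  have "T u v w = 0" for u v w
  proof (rule sym_skew_eq_0[of T])
    fix u v w
    have "N u (N v X) - N v (N u X) = N (br u v) X"
      using flat unfolding flat_connection_def by (metis diff_eq_eq add_0)
    also have "\<dots> = N (N u v) X - N (N v u) X"
      using torsion[of u v] bilinear_lsub[OF bN] by metis
    finally have "N u (N v X) - N (N u v) X = N v (N u X) - N (N v u) X"
      by (simp add: algebra_simps)
    then show "T u v w = T v u w"
      unfolding T_def by simp
    have "B (N u (N v X)) w = B v (N (N u w) X)"
      using metric[of u "N v X" w] killing[of v "N u w"] by simp
    moreover have "B (N (N u v) X) w = B v (N u (N w X))"
      using killing[of "N u v" w] metric[of u v "N w X"] by simp
    ultimately show "T u v w = - T u w v"
      unfolding T_def bilinear_lsub[OF bl]
      using sym[of v "N (N u w) X"] sym[of v "N u (N w X)"] by simp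
  qed
  then have "N u (N v X) - N (N u v) X = 0"
    using B(2) unfolding T_def nondegenerate_def by blast
  then show ?thesis by simp
qed

lemma flat_killing_timelike_parallel:
  assumes lor: "lorentzian_form mu"
    and N: "is_levi_civita mu br N" and flat: "flat_connection br N"
    and killing: "\<And>u v. mu (N u X) v + mu u (N v X) = 0" and X: "mu X X < 0"
  shows "N u X = 0"
proof (rule ccontr)
  assume NX: "N u X \<noteq> 0"
  have sb: "sym_bilinear_form mu" and nd: "nondegenerate mu"
    using lor by (auto simp: lorentzian_form_def)
  then have bl: "bilinear mu" and sym: "\<And>x y. mu x y = mu y x"
    by (auto simp: sym_bilinear_form_def)
  have bN: "bilinear N" and metric: "\<And>u v w. mu (N u v) w + mu v (N u w) = 0"
    using N by (auto simp: is_levi_civita_def)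
  have NX_orth: "mu (N v X) X = 0" for v
    using metric[of v X X] sym[of X "N v X"] by simp
  have "N X X = 0"
  proof (rule nondegenerate_eqI[OF bl nd])
    fix w
    show "mu (N X X) w = mu 0 w"
      using killing[of w X] NX_orth[of w] sym[of w "N X X"] by (simp add: bilinear_lzero[OF bl])
  qed
  then have "N (N u X) X = 0"
    using flat_killing_second_derivative_eq_0[where B=mu and N=N and X=X and u=u and v=X,
        OF sb nd N flat killing]
    by (simp add: bilinear_rzero[OF bN])
  then have "mu (N u X) (N u X) = 0"
    using killing[of "N u X" u] by (simp add: bilinear_lzero[OF bl] bilinear_rzero[OF bl])
  then show False
    using lorentzian_orthogonal_timelike_spacelike[OF lor X NX_orth NX] by simp
qed

lemma riemannian_relative_eigenvector:
  fixes B g :: "'a::euclidean_space \<Rightarrow> 'a \<Rightarrow> real"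
  assumes g: "riemannian_form g" and B: "sym_bilinear_form B"
  obtains X lam where "X \<noteq> 0" "\<And>y. lam * g y y \<le> B y y" "\<And>w. B X w = lam * g X w"
proof -
  have bl: "bilinear B" and sym: "\<And>x y. B x y = B y x"
    using B by (auto simp: sym_bilinear_form_def)
  have bg: "bilinear g" and sym_g: "\<And>x y. g x y = g y x" and g_pos: "\<And>x. x \<noteq> 0 \<Longrightarrow> g x x > 0"
    using g by (auto simp: riemannian_form_def sym_bilinear_form_def)
  \<comment> \<open>X minimises B/g on the unit sphere; then B - \<lambda>g is semidefinite with X isotropic\<close>
  define f where "f x = B x x / g x x" for x
  have "g x x \<noteq> 0" if "x \<in> sphere 0 1" for x
    using g_pos[of x] that by fastforce
  then have "continuous_on (sphere 0 1) f"
    unfolding f_def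
    by (intro continuous_on_divide bilinear_continuous_on_compose[OF _ _ bl]
        bilinear_continuous_on_compose[OF _ _ bg] continuous_on_id) auto
  moreover have "sphere (0::'a) 1 \<noteq> {}" by simp
  ultimately obtain X where X: "X \<in> sphere 0 1" and X_min: "\<And>y. y \<in> sphere 0 1 \<Longrightarrow> f X \<le> f y"
    using continuous_attains_inf[OF compact_sphere] by blast
  define lam where "lam = f X"
  have X0: "X \<noteq> 0" using X by auto
  have lower: "lam * g y y \<le> B y y" for y
  proof (cases "y = 0")
    case True
    then show ?thesis by (simp add: bilinear_lzero[OF bl] bilinear_lzero[OF bg])
  next
    case False
    then have "lam \<le> f ((1 / norm y) *\<^sub>R y)"
      unfolding lam_def by (intro X_min) simp
    also have "\<dots> = B y y / g y y"
      using False by (simp add: f_def bilinear_lmul[OF bl] bilinear_rmul[OF bl]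
          bilinear_lmul[OF bg] bilinear_rmul[OF bg])
    finally show ?thesis using g_pos[OF False] by (simp add: pos_le_divide_eq)
  qed
  define Q where "Q x y = B x y - lam * g x y" for x y
  have "bilinear Q"
    unfolding Q_def bilinear_def linear_iff
    by (simp add: bilinear_ladd[OF bl] bilinear_radd[OF bl] bilinear_lmul[OF bl] bilinear_rmul[OF bl]
        bilinear_ladd[OF bg] bilinear_radd[OF bg] bilinear_lmul[OF bg] bilinear_rmul[OF bg] algebra_simps)
  moreover have "Q x y = Q y x" for x y
    unfolding Q_def using sym sym_g by metis
  moreover have "Q X X = 0"
    unfolding Q_def lam_def f_def using g_pos[OF X0] by simp
  ultimately have "Q X w = 0" for w
    using semidefinite_isotropic_orthogonal[of Q UNIV X w] lower unfolding Q_def by auto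
  then show thesis
    using that[OF X0 lower] unfolding Q_def by simp
qed

lemma common_levi_civita_timelike_parallel:
  assumes lor: "lorentzian_form mu" and g: "riemannian_form g"
    and N_mu: "is_levi_civita mu br N" and N_g: "is_levi_civita g br N"
  obtains X where "mu X X < 0" "\<And>u. N u X = 0"
proof -
  have sb: "sym_bilinear_form mu" using lor by (simp add: lorentzian_form_def)
  obtain v where v: "mu v v < 0" using lor by (auto simp: lorentzian_form_def)
  have g_pos: "\<And>x. x \<noteq> 0 \<Longrightarrow> g x x > 0" and sym_g: "\<And>x y. g x y = g y x"
    using g by (auto simp: riemannian_form_def sym_bilinear_form_def)
  have metric_mu: "\<And>u v w. mu (N u v) w + mu v (N u w) = 0"
    and metric_g: "\<And>u v w. g (N u v) w + g v (N u w) = 0"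
    using N_mu N_g by (auto simp: is_levi_civita_def)
  obtain X lam where X0: "X \<noteq> 0" and lower: "\<And>y. lam * g y y \<le> mu y y"
    and eigen: "\<And>w. mu X w = lam * g X w"
    using riemannian_relative_eigenvector[OF g sb] by blast
  have "v \<noteq> 0" using v lor by (auto simp: lorentzian_form_def sym_bilinear_form_def bilinear_lzero)
  then have lam: "lam < 0"
    using lower[of v] v g_pos[of v] by (metis mult_nonneg_nonneg less_le_trans not_less less_imp_le)
  have X: "mu X X < 0"
    using eigen[of X] g_pos[OF X0] lam by (simp add: mult_neg_pos)
  have "N u X = 0" for u
  proof (rule ccontr)
    assume Y0: "N u X \<noteq> 0"
    have eigen_Y: "mu (N u X) w = lam * g (N u X) w" for w
    proof -
      have "mu (N u X) w = - mu X (N u w)" using metric_mu[of u X w] by simp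
      also have "\<dots> = - lam * g X (N u w)" using eigen[of "N u w"] by simp
      also have "\<dots> = lam * g (N u X) w"
        using metric_g[of u X w] by (simp add: eq_neg_iff_add_eq_0[symmetric])
      finally show ?thesis .
    qed
    have "g (N u X) X = 0"
      using metric_g[of u X X] sym_g[of X "N u X"] by simp
    then have "mu (N u X) (N u X) > 0"
      using lorentzian_orthogonal_timelike_spacelike[OF lor X _ Y0] eigen_Y[of X] by simp
    moreover have "mu (N u X) (N u X) < 0"
      using eigen_Y[of "N u X"] g_pos[OF Y0] lam by (simp add: mult_neg_pos)
    ultimately show False by simp
  qed
  then show thesis using that X by blast
qed

theorem corollary1p3:
  fixes br :: "'a::euclidean_space \<Rightarrow> 'a \<Rightarrow> 'a" and mu :: "'a \<Rightarrow> 'a \<Rightarrow> real"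
  assumes "lie_algebra br"
    and "lorentzian_form mu"
    and "flat_connection br (levi_civita mu br)"
  shows "(\<exists>X. mu X X < 0 \<and> killing mu br X) \<longleftrightarrow>
         (\<exists>g. riemannian_form g \<and> levi_civita g br = levi_civita mu br)"
proof -
  let ?N = "levi_civita mu br"
  have br: "bilinear br" "\<And>x y. br x y = - br y x"
    using assms(1) unfolding lie_algebra_def by blast+
  have mu: "sym_bilinear_form mu" "nondegenerate mu"
    using assms(2) by (simp_all add: lorentzian_form_def)
  have N_mu: "is_levi_civita mu br ?N"
    using is_levi_civita_levi_civita[OF mu br] .
  show ?thesis
  proof
    assume "\<exists>X. mu X X < 0 \<and> killing mu br X"
    then obtain X where X: "mu X X < 0" and "killing mu br X" by blast
    then have "\<And>u v. mu (?N u X) v + mu u (?N v X) = 0"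
      unfolding killing_def by blast
    then have "?N u X = 0" for u
      by (rule flat_killing_timelike_parallel[OF assms(2) N_mu assms(3) _ X])
    moreover have g: "riemannian_form (flip_along mu X)"
      by (rule riemannian_form_flip_along[OF assms(2) X])
    ultimately have "levi_civita (flip_along mu X) br = ?N"
      using g levi_civita_eqI[OF _ riemannian_form_nondegenerate
          is_levi_civita_flip_along[OF mu(1) N_mu]]
      unfolding riemannian_form_def by blast
    with g show "\<exists>g. riemannian_form g \<and> levi_civita g br = ?N" by blast
  next
    assume "\<exists>g. riemannian_form g \<and> levi_civita g br = ?N"
    then obtain g where g: "riemannian_form g" and g_N: "levi_civita g br = ?N" by blast
    have "is_levi_civita g br ?N"
      using is_levi_civita_levi_civita[OF _ riemannian_form_nondegenerate[OF g] br] g g_N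
      unfolding riemannian_form_def by simp
    then obtain X where "mu X X < 0" "\<And>u. ?N u X = 0"
      using common_levi_civita_timelike_parallel[OF assms(2) g N_mu] by blast
    moreover have "bilinear mu" using mu(1) by (simp add: sym_bilinear_form_def)
    ultimately show "\<exists>X. mu X X < 0 \<and> killing mu br X"
      unfolding killing_def by (auto simp: bilinear_lzero bilinear_rzero)
  qed
qed

end
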